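(* Let $q\ge2$, let $\mathcal{D}$ be a $2k$-wise uniform distribution over $(\mathbb{Z}/q\mathbb{Z})^n$, and let $\eta\in[0,1]$. Then for every length-$n$ width-$w$ standard-order read-once branching program $f:(\mathbb{Z}/q\mathbb{Z})^n\to\{0,1\}$, $$\left|\mathbb{E}_{x\sim\mathcal{D}}(T_\eta f)(x)-\mathbb{E}_{x\gets(\mathbb{Z}/q\mathbb{Z})^n}f(x)\right|\le nw(1-\eta)^k,$$ where the second expectation is over uniform $x$. Equivalently, if $x\sim\mathcal{D}$ and $y\gets\mathrm{SC}_\eta(x)$, then $y$ is $nw(1-\eta)^k$-pseudorandom to every such $f$.
   Context: A distribution on $(\mathbb{Z}/q\mathbb{Z})^n$ is $t$-wise uniform if its marginal on any $t$ coordinates is uniform. $\mathrm{SC}_\eta(x)$ independently keeps each coordinate of $x$ with probability $1-\eta$ and replaces it with a uniform element of $\mathbb{Z}/q\mathbb{Z}$ with probability $\eta$; the noise operator is $(T_\eta f)(x)=\mathbb{E}[f(\mathrm{SC}_\eta(x))]$. A length-$n$ width-$w$ standard-order read-once branching program consists of layers $V_0,\dots,V_n$ each with at most $w$ vertices, a start vertex in $V_0$, a set of accepting vertices in $V_n$, and for each vertex of $V_{i-1}$ and each symbol $a\in\mathbb{Z}/q\mathbb{Z}$ an edge labeled $a$ to a vertex of $V_i$; on input $x$ one follows from the start the edges labeled $x_1,\dots,x_n$, and $f(x)=1$ iff the final vertex is accepting. *)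

theory Defs
  imports "HOL-Probability.Probability"
begin

text \<open>(Z/qZ)^n is represented as lists of length n with entries in {0..<q}.\<close>
definition cube :: "nat \<Rightarrow> nat \<Rightarrow> nat list set" where
  "cube q n = {xs. length xs = n \<and> set xs \<subseteq> {..<q}}"

definition t_wise_uniform :: "nat \<Rightarrow> nat \<Rightarrow> nat \<Rightarrow> nat list pmf \<Rightarrow> bool" where
  "t_wise_uniform q n t D \<longleftrightarrow>
     set_pmf D \<subseteq> cube q n \<and>
     (\<forall>S a. S \<subseteq> {..<n} \<and> card S \<le> t \<and> (\<forall>i\<in>S. a i < q) \<longrightarrow>
        measure_pmf.prob D {x. \<forall>i\<in>S. x ! i = a i} = 1 / real q ^ card S)"

text \<open>Probability that SC_eta maps x to y: each coordinate independently kept with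
  probability 1-eta, replaced by a uniform symbol with probability eta.\<close>
definition sc_prob :: "nat \<Rightarrow> real \<Rightarrow> nat list \<Rightarrow> nat list \<Rightarrow> real" where
  "sc_prob q \<eta> x y = (\<Prod>i<length x. (1 - \<eta>) * (if x ! i = y ! i then 1 else 0) + \<eta> / real q)"

definition noise_op :: "nat \<Rightarrow> nat \<Rightarrow> real \<Rightarrow> (nat list \<Rightarrow> real) \<Rightarrow> nat list \<Rightarrow> real" where
  "noise_op q n \<eta> f x = (\<Sum>y\<in>cube q n. sc_prob q \<eta> x y * f y)"

text \<open>Read-once branching program in standard order: layers V 0, ..., V n (vertex sets),
  start vertex, accepting set, and transition  trans i v a  for the edge labelled a
  from vertex v of layer i to layer i+1 (reading coordinate i, 0-based).\<close>
definition is_robp ::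
  "nat \<Rightarrow> nat \<Rightarrow> nat \<Rightarrow> (nat \<Rightarrow> 'v set) \<Rightarrow> 'v \<Rightarrow> 'v set \<Rightarrow> (nat \<Rightarrow> 'v \<Rightarrow> nat \<Rightarrow> 'v) \<Rightarrow> bool" where
  "is_robp q n w V s Acc tr \<longleftrightarrow>
     (\<forall>i\<le>n. finite (V i) \<and> card (V i) \<le> w) \<and> s \<in> V 0 \<and> Acc \<subseteq> V n \<and>
     (\<forall>i<n. \<forall>v\<in>V i. \<forall>a<q. tr i v a \<in> V (Suc i))"

fun rob_run :: "(nat \<Rightarrow> 'v \<Rightarrow> nat \<Rightarrow> 'v) \<Rightarrow> nat \<Rightarrow> 'v \<Rightarrow> nat list \<Rightarrow> 'v" where
  "rob_run tr i v [] = v"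
| "rob_run tr i v (a # xs) = rob_run tr (Suc i) (tr i v a) xs"

definition rob_eval :: "'v \<Rightarrow> 'v set \<Rightarrow> (nat \<Rightarrow> 'v \<Rightarrow> nat \<Rightarrow> 'v) \<Rightarrow> nat list \<Rightarrow> real" where
  "rob_eval s Acc tr x = (if rob_run tr 0 s x \<in> Acc then 1 else 0)"

end

theory Submission
  imports Defs
begin

text \<open>
  Write \<open>\<rho> = 1 - \<eta>\<close> and \<open>\<delta>(c, d) = [c = d] - 1/q\<close>. The noise kernel factorises as
  \<open>sc_prob x y = \<Prod>\<^sub>j (1/q + \<rho> \<delta>(x\<^sub>j, y\<^sub>j))\<close>. Expanding this product into monomials in the
  \<open>\<delta>\<close>'s, the constant monomial yields the uniform average of \<open>f\<close>, and every monomial with between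
  \<open>1\<close> and \<open>k - 1\<close> factors has mean zero under a \<open>(k - 1)\<close>-wise uniform \<open>x\<close>. The remaining
  monomials are grouped by the coordinate \<open>i\<close> of their \<open>k\<close>-th factor: up to \<open>\<rho>\<^sup>k\<close>, such a group is
  a polynomial \<open>G\<close> of degree \<open>k\<close> in the coordinates \<open>\<le> i\<close>, times the noise kernel on the
  coordinates \<open>> i\<close>. Cutting the program at layer \<open>i + 1\<close>, the group contributes
  \<open>\<rho>\<^sup>k \<Sum>\<^sub>v E[G\<^sub>v H\<^sub>v]\<close>, where \<open>H\<^sub>v \<in> [0, 1]\<close> is the noisy acceptance probability from the
  vertex \<open>v\<close> and \<open>G\<^sub>v\<close> is \<open>G\<close> applied to the indicator of reaching \<open>v\<close>. Since \<open>G\<^sub>v\<^sup>2\<close> involves at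
  most \<open>2k\<close> coordinates, \<open>E[G\<^sub>v\<^sup>2]\<close> is the same as for uniform \<open>x\<close>, and Parseval bounds it
  by \<open>1\<close>. Hence each of the \<open>n\<close> groups contributes at most \<open>w \<rho>\<^sup>k\<close>.
\<close>

lemma sum_mult_sum_swap:
  fixes p :: "'x \<Rightarrow> 'b::comm_semiring_0"
  shows "(\<Sum>x\<in>X. p x * (\<Sum>a\<in>A. f a x)) = (\<Sum>a\<in>A. \<Sum>x\<in>X. p x * f a x)"
  by (simp add: sum_distrib_left sum.swap[of _ A])

lemma abs_sum_mult_le_1:
  fixes p g h :: "'a \<Rightarrow> real"
  assumes p: "\<And>x. x \<in> X \<Longrightarrow> 0 \<le> p x" "sum p X = 1"
    and h: "\<And>x. x \<in> X \<Longrightarrow> \<bar>h x\<bar> \<le> 1" and g: "(\<Sum>x\<in>X. p x * (g x)\<^sup>2) \<le> 1"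
  shows "\<bar>\<Sum>x\<in>X. p x * (g x * h x)\<bar> \<le> 1"
proof -
  have "\<bar>\<Sum>x\<in>X. p x * (g x * h x)\<bar> \<le> (\<Sum>x\<in>X. p x * \<bar>g x\<bar>)"
    using p h by (intro order.trans[OF sum_abs] sum_mono)
      (auto simp: abs_mult intro!: mult_left_mono mult_left_le)
  also have "\<dots> \<le> (\<Sum>x\<in>X. p x * ((1 + (g x)\<^sup>2) / 2))"
  proof (intro sum_mono mult_left_mono p)
    fix x
    have "0 \<le> (\<bar>g x\<bar> - 1)\<^sup>2" by simp
    then show "\<bar>g x\<bar> \<le> (1 + (g x)\<^sup>2) / 2"
      by (simp add: power2_eq_square algebra_simps abs_mult_self_eq)
  qed
  also have "\<dots> = (sum p X + (\<Sum>x\<in>X. p x * (g x)\<^sup>2)) / 2"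
    by (simp add: distrib_left sum.distrib flip: sum_divide_distrib)
  also have "\<dots> \<le> 1" using p(2) g by simp
  finally show ?thesis .
qed

section \<open>The cube and the noise kernel\<close>

lemma length_cube: "x \<in> cube q n \<Longrightarrow> length x = n"
  by (simp add: cube_def)

lemma nth_cube_less: "x \<in> cube q n \<Longrightarrow> j < n \<Longrightarrow> x ! j < q"
  by (auto simp: cube_def dest!: nth_mem)

lemma drop_in_cube: "x \<in> cube q n \<Longrightarrow> drop m x \<in> cube q (n - m)"
  by (auto simp: cube_def dest: in_set_dropD)

lemma finite_cube [simp]: "finite (cube q n)"
proof -
  have "cube q n = {xs. set xs \<subseteq> {..<q} \<and> length xs = n}" by (auto simp: cube_def)
  thus ?thesis using finite_lists_length_eq[of "{..<q}" n] by simp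
qed

lemma sum_cube_append:
  "(\<Sum>y\<in>cube q (m1 + m2). F y) = (\<Sum>y1\<in>cube q m1. \<Sum>y2\<in>cube q m2. F (y1 @ y2))"
proof -
  have bij: "bij_betw (\<lambda>(y1, y2). y1 @ y2) (cube q m1 \<times> cube q m2) (cube q (m1 + m2))"
  proof (rule bij_betw_byWitness[where f' = "\<lambda>y. (take m1 y, drop m1 y)"])
    show "(\<lambda>y. (take m1 y, drop m1 y)) ` cube q (m1 + m2) \<subseteq> cube q m1 \<times> cube q m2"
      by (auto simp: cube_def dest: in_set_takeD in_set_dropD)
  qed (auto simp: cube_def)
  show ?thesis
    by (simp add: sum.reindex_bij_betw[OF bij, symmetric] sum.cartesian_product split_def)
qed

lemma sum_cube_prod:
  fixes \<phi> :: "nat \<Rightarrow> nat \<Rightarrow> real"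
  shows "(\<Sum>y\<in>cube q m. \<Prod>j<m. \<phi> j (y ! j)) = (\<Prod>j<m. \<Sum>c<q. \<phi> j c)"
proof (induction m)
  case 0
  have "cube q 0 = {[]}" by (auto simp: cube_def)
  thus ?case by simp
next
  case (Suc m)
  have cube_1: "cube q 1 = (\<lambda>c. [c]) ` {..<q}"
    by (auto simp: cube_def length_Suc_conv)
  have "(\<Sum>y\<in>cube q (Suc m). \<Prod>j<Suc m. \<phi> j (y ! j))
      = (\<Sum>y\<in>cube q m. \<Sum>c<q. \<Prod>j<Suc m. \<phi> j ((y @ [c]) ! j))"
    unfolding Suc_eq_plus1 sum_cube_append cube_1 by (simp add: sum.reindex inj_on_def)
  also have "\<dots> = (\<Sum>y\<in>cube q m. \<Sum>c<q. (\<Prod>j<m. \<phi> j (y ! j)) * \<phi> m c)"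
    by (intro sum.cong refl)
      (auto simp: prod.lessThan_Suc nth_append length_cube intro!: prod.cong)
  also have "\<dots> = (\<Prod>j<Suc m. \<Sum>c<q. \<phi> j c)"
    by (simp add: Suc sum_product[symmetric])
  finally show ?case .
qed

lemma card_cube: "real (card (cube q m)) = real q ^ m"
  using sum_cube_prod[where \<phi> = "\<lambda>_ _. 1"] by simp

lemma expectation_eq_sum_cube:
  "set_pmf D \<subseteq> cube q n \<Longrightarrow> measure_pmf.expectation D F = (\<Sum>x\<in>cube q n. pmf D x * F x)"
  by (subst integral_measure_pmf[of "cube q n"]) auto

lemma sum_pmf_cube: "set_pmf D \<subseteq> cube q n \<Longrightarrow> (\<Sum>x\<in>cube q n. pmf D x) = 1"
  by (rule sum_pmf_eq_1) auto

lemma t_wise_uniform_sum_prod: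
  fixes \<phi> :: "nat \<Rightarrow> nat \<Rightarrow> real"
  assumes tw: "t_wise_uniform q n t D" and J: "J \<subseteq> {..<n}" "card J \<le> t"
  shows "(\<Sum>x\<in>cube q n. pmf D x * (\<Prod>j\<in>J. \<phi> j (x ! j))) = (\<Prod>j\<in>J. (\<Sum>c<q. \<phi> j c) / real q)"
proof -
  have fin: "finite J" using J(1) finite_subset by blast
  have supp: "set_pmf D \<subseteq> cube q n" using tw by (simp add: t_wise_uniform_def)
  define P where "P = PiE J (\<lambda>_. {..<q})"
  define agree where "agree a = {x. \<forall>j\<in>J. x ! j = a j}" for a :: "nat \<Rightarrow> nat"
  have expand: "(\<Prod>j\<in>J. \<phi> j (x ! j)) = (\<Sum>a\<in>P. (\<Prod>j\<in>J. \<phi> j (a j)) * indicator (agree a) x)"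
    if x: "x \<in> cube q n" for x
  proof -
    have "(\<Prod>j\<in>J. \<phi> j (x ! j)) = (\<Prod>j\<in>J. \<Sum>c<q. if x ! j = c then \<phi> j c else 0)"
      using J(1) nth_cube_less[OF x] by (intro prod.cong refl) (auto simp: sum.delta)
    also have "\<dots> = (\<Sum>a\<in>P. \<Prod>j\<in>J. if x ! j = a j then \<phi> j (a j) else 0)"
      unfolding P_def by (rule prod_sum_PiE[OF fin]) simp
    also have "\<dots> = (\<Sum>a\<in>P. (\<Prod>j\<in>J. \<phi> j (a j)) * indicator (agree a) x)"
      by (intro sum.cong refl) (auto simp: prod.distrib agree_def indicator_def prod_zero_iff fin)
    finally show ?thesis .
  qed
  have prob: "measure_pmf.prob D (agree a) = 1 / real q ^ card J" if "a \<in> P" for a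
    using tw J that unfolding t_wise_uniform_def agree_def P_def by (auto simp: PiE_iff)
  have "(\<Sum>x\<in>cube q n. pmf D x * (\<Prod>j\<in>J. \<phi> j (x ! j)))
      = (\<Sum>x\<in>cube q n. \<Sum>a\<in>P. (\<Prod>j\<in>J. \<phi> j (a j)) * (pmf D x * indicator (agree a) x))"
    by (intro sum.cong refl) (simp add: expand sum_distrib_left mult_ac)
  also have "\<dots> = (\<Sum>a\<in>P. (\<Prod>j\<in>J. \<phi> j (a j)) * (\<Sum>x\<in>cube q n. pmf D x * indicator (agree a) x))"
    by (subst sum.swap) (simp only: sum_distrib_left)
  also have "\<dots> = (\<Sum>a\<in>P. (\<Prod>j\<in>J. \<phi> j (a j)) / real q ^ card J)"
    by (intro sum.cong refl) (simp add: prob expectation_eq_sum_cube[OF supp, symmetric])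
  also have "\<dots> = (\<Prod>j\<in>J. (\<Sum>c<q. \<phi> j c) / real q)"
    unfolding P_def by (simp add: prod_sum_PiE[OF fin] sum_divide_distrib[symmetric] prod_dividef)
  finally show ?thesis .
qed

definition centered_eq :: "nat \<Rightarrow> nat \<Rightarrow> nat \<Rightarrow> real" where
  "centered_eq q c d = (if c = d then 1 else 0) - 1 / real q"

lemma sum_centered_eq: "d < q \<Longrightarrow> (\<Sum>c<q. centered_eq q c d) = 0"
  by (simp add: centered_eq_def sum_subtractf)

lemma sum_centered_eq_mult:
  assumes "d < q" "d' < q"
  shows "(\<Sum>c<q. centered_eq q c d * centered_eq q c d') = centered_eq q d d'"
proof -
  have "(\<Sum>c<q. centered_eq q c d * centered_eq q c d')
      = (\<Sum>c<q. (if c = d then centered_eq q d d' else 0) - centered_eq q c d' / real q)"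
    by (intro sum.cong refl) (auto simp: centered_eq_def field_simps)
  also have "\<dots> = centered_eq q d d'"
    using assms by (simp add: sum_subtractf sum_divide_distrib[symmetric] sum_centered_eq)
  finally show ?thesis .
qed

lemma sc_prob_eq_prod:
  assumes "q > 0" "length x = n"
  shows "sc_prob q \<eta> x y = (\<Prod>j<n. 1 / real q + (1 - \<eta>) * centered_eq q (x ! j) (y ! j))"
  unfolding sc_prob_def assms(2)
  by (intro prod.cong refl) (use assms(1) in \<open>auto simp: centered_eq_def field_simps\<close>)

lemma sc_prob_drop:
  assumes "q > 0" "length x = n" "length y = n"
  shows "sc_prob q \<eta> (drop m x) (drop m y)
       = (\<Prod>j\<in>{m..<n}. 1 / real q + (1 - \<eta>) * centered_eq q (x ! j) (y ! j))"
proof (cases "m \<le> n")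
  case True
  then show ?thesis
    using assms by (simp add: sc_prob_eq_prod prod.atLeastLessThan_shift_0[of _ m n] atLeast0LessThan)
qed (use assms in \<open>simp add: sc_prob_def\<close>)

lemma sc_prob_nonneg: "0 \<le> \<eta> \<Longrightarrow> \<eta> \<le> 1 \<Longrightarrow> 0 \<le> sc_prob q \<eta> x y"
  unfolding sc_prob_def by (intro prod_nonneg) auto

lemma sum_sc_prob:
  assumes "q > 0" "x \<in> cube q n"
  shows "(\<Sum>y\<in>cube q n. sc_prob q \<eta> x y) = 1"
proof -
  have "(\<Sum>y\<in>cube q n. sc_prob q \<eta> x y)
      = (\<Prod>j<n. \<Sum>c<q. (1 - \<eta>) * (if x ! j = c then 1 else 0) + \<eta> / real q)"
    unfolding sc_prob_def length_cube[OF assms(2)] by (rule sum_cube_prod)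
  also have "\<dots> = 1"
    using assms by (simp add: sum.distrib sum_distrib_left[symmetric] nth_cube_less)
  finally show ?thesis .
qed

lemma noise_op_bounds:
  assumes "q > 0" "0 \<le> \<eta>" "\<eta> \<le> 1" "x \<in> cube q n" and f: "\<And>y. 0 \<le> f y \<and> f y \<le> 1"
  shows "0 \<le> noise_op q n \<eta> f x \<and> noise_op q n \<eta> f x \<le> 1"
proof -
  have "0 \<le> noise_op q n \<eta> f x"
    unfolding noise_op_def using assms sc_prob_nonneg by (intro sum_nonneg) auto
  moreover have "noise_op q n \<eta> f x \<le> (\<Sum>y\<in>cube q n. sc_prob q \<eta> x y)"
    unfolding noise_op_def using assms sc_prob_nonneg by (intro sum_mono) (simp add: mult_left_le)
  ultimately show ?thesis using sum_sc_prob[OF assms(1,4)] by simp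
qed

section \<open>Degree parts of a product of binomials\<close>

definition prod_add_degree ::
    "(nat \<Rightarrow> 'a::comm_semiring_1) \<Rightarrow> (nat \<Rightarrow> 'a) \<Rightarrow> nat \<Rightarrow> nat \<Rightarrow> 'a" where
  "prod_add_degree a b l m = (\<Sum>S | S \<subseteq> {..<m} \<and> card S = l. prod b S * prod a ({..<m} - S))"

lemma finite_subsets_card: "finite {S. S \<subseteq> {..<m::nat} \<and> card S = l}"
  by (rule finite_subset[of _ "Pow {..<m}"]) auto

lemma prod_add_degree_0: "prod_add_degree a b 0 m = prod a {..<m}"
proof -
  have "{S. S \<subseteq> {..<m} \<and> card S = 0} = {{}}"
    by (auto dest: finite_subset)
  thus ?thesis by (simp add: prod_add_degree_def)
qed

lemma prod_add_degree_0_factors: "prod_add_degree a b l 0 = (if l = 0 then 1 else 0)"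
proof -
  have "{S. S \<subseteq> {..<0::nat} \<and> card S = l} = (if l = 0 then {{}} else {})" by auto
  thus ?thesis by (simp add: prod_add_degree_def)
qed

lemma subsets_card_Suc_lessThan_Suc:
  "{S. S \<subseteq> {..<Suc m} \<and> card S = Suc l}
     = {S. S \<subseteq> {..<m} \<and> card S = Suc l} \<union> insert m ` {S. S \<subseteq> {..<m} \<and> card S = l}"
proof (intro equalityI subsetI)
  fix S assume S: "S \<in> {S. S \<subseteq> {..<Suc m} \<and> card S = Suc l}"
  have "finite S" using S finite_subset by auto
  show "S \<in> {S. S \<subseteq> {..<m} \<and> card S = Suc l} \<union> insert m ` {S. S \<subseteq> {..<m} \<and> card S = l}"
  proof (cases "m \<in> S")
    case True
    then have "S = insert m (S - {m})" "S - {m} \<subseteq> {..<m}" "card (S - {m}) = l"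
      using S \<open>finite S\<close> by (auto simp: less_Suc_eq)
    then show ?thesis by blast
  qed (use S in \<open>auto simp: less_Suc_eq\<close>)
qed (auto simp: card_insert_if finite_subset)

lemma prod_add_degree_Suc_Suc:
  "prod_add_degree a b (Suc l) (Suc m) = prod_add_degree a b (Suc l) m * a m + prod_add_degree a b l m * b m"
proof -
  let ?F = "\<lambda>l. {S. S \<subseteq> {..<m} \<and> card S = l}"
  let ?t = "\<lambda>S. prod b S * prod a ({..<Suc m} - S)"
  have without_m: "?t S = prod b S * prod a ({..<m} - S) * a m" if "S \<in> ?F (Suc l)" for S
  proof -
    have "{..<Suc m} - S = insert m ({..<m} - S)" using that by auto
    thus ?thesis by (simp add: mult_ac)
  qed
  have with_m: "?t (insert m S) = prod b S * prod a ({..<m} - S) * b m" if "S \<in> ?F l" for S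
  proof -
    have "{..<Suc m} - insert m S = {..<m} - S" "m \<notin> S" "finite S"
      using that finite_subset by auto
    thus ?thesis by (simp add: mult_ac)
  qed
  have "prod_add_degree a b (Suc l) (Suc m) = sum ?t (?F (Suc l)) + sum ?t (insert m ` ?F l)"
    unfolding prod_add_degree_def subsets_card_Suc_lessThan_Suc
    by (rule sum.union_disjoint) (auto simp: finite_subsets_card)
  also have "sum ?t (?F (Suc l)) = (\<Sum>S\<in>?F (Suc l). prod b S * prod a ({..<m} - S) * a m)"
    by (rule sum.cong[OF refl without_m])
  also have "sum ?t (insert m ` ?F l) = sum (?t \<circ> insert m) (?F l)"
    by (rule sum.reindex) (auto simp: inj_on_def)
  also have "\<dots> = (\<Sum>S\<in>?F l. prod b S * prod a ({..<m} - S) * b m)"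
    by (rule sum.cong[OF refl]) (simp add: with_m)
  finally show ?thesis
    by (simp add: prod_add_degree_def sum_distrib_right)
qed

text \<open>The terms of degree \<open>> k\<close> in \<open>b\<close> are grouped by the position \<open>i\<close> of their
  \<open>(k + 1)\<close>-st \<open>b\<close>-factor.\<close>

lemma prod_add_truncated:
  "(\<Prod>j<n. a j + b j) = (\<Sum>l\<le>k. prod_add_degree a b l n)
     + (\<Sum>i<n. prod_add_degree a b k i * b i * (\<Prod>j\<in>{Suc i..<n}. a j + b j))"
proof (induction n)
  case 0
  show ?case by (simp add: prod_add_degree_0_factors)
next
  case (Suc n)
  let ?R = "\<lambda>n. \<Sum>i<n. prod_add_degree a b k i * b i * (\<Prod>j\<in>{Suc i..<n}. a j + b j)"
  have head: "(\<Sum>l\<le>k. prod_add_degree a b l n) * (a n + b n)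
      = (\<Sum>l\<le>k. prod_add_degree a b l (Suc n)) + prod_add_degree a b k n * b n"
  proof (induction k)
    case (Suc k)
    have "(\<Sum>l\<le>Suc k. prod_add_degree a b l (Suc n)) + prod_add_degree a b (Suc k) n * b n
        = ((\<Sum>l\<le>k. prod_add_degree a b l (Suc n)) + prod_add_degree a b k n * b n)
          + prod_add_degree a b (Suc k) n * (a n + b n)"
      by (simp add: prod_add_degree_Suc_Suc algebra_simps)
    then show ?case unfolding Suc.IH[symmetric] by (simp add: algebra_simps)
  qed (simp add: prod_add_degree_0 algebra_simps)
  have tail: "?R (Suc n) = ?R n * (a n + b n) + prod_add_degree a b k n * b n"
    by (simp add: sum_distrib_left prod.atLeastLessThan_Suc mult_ac)
  have "(\<Prod>j<Suc n. a j + b j) = ((\<Sum>l\<le>k. prod_add_degree a b l n) + ?R n) * (a n + b n)"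
    by (simp add: Suc.IH)
  also have "\<dots> = (\<Sum>l\<le>k. prod_add_degree a b l (Suc n)) + ?R (Suc n)"
    unfolding distrib_right head tail by (simp add: algebra_simps)
  finally show ?case .
qed

lemma prod_add_degree_const:
  "prod_add_degree (\<lambda>_. c) b l m = c ^ (m - l) * (\<Sum>S | S \<subseteq> {..<m} \<and> card S = l. prod b S)"
  unfolding prod_add_degree_def sum_distrib_left
  by (intro sum.cong refl) (auto simp: card_Diff_subset finite_subset mult.commute)

definition subsets_with_max :: "nat \<Rightarrow> nat \<Rightarrow> nat set set" where
  "subsets_with_max l i = {A. A \<subseteq> {..i} \<and> i \<in> A \<and> card A = l}"

lemma subsets_with_max_Suc:
  "subsets_with_max (Suc l) i = insert i ` {S. S \<subseteq> {..<i} \<and> card S = l}"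
proof (intro equalityI subsetI)
  fix A assume A: "A \<in> subsets_with_max (Suc l) i"
  then have "A = insert i (A - {i})" "A - {i} \<subseteq> {..<i}" "card (A - {i}) = l"
    using finite_subset[of A "{..i}"] by (auto simp: subsets_with_max_def)
  then show "A \<in> insert i ` {S. S \<subseteq> {..<i} \<and> card S = l}" by blast
qed (auto simp: subsets_with_max_def card_insert_if finite_subset)

lemma prod_add_degree_const_mult:
  "prod_add_degree (\<lambda>_. c) b k i * b i = c ^ (i - k) * (\<Sum>A\<in>subsets_with_max (Suc k) i. prod b A)"
proof -
  have "(\<Sum>A\<in>subsets_with_max (Suc k) i. prod b A)
      = (\<Sum>S | S \<subseteq> {..<i} \<and> card S = k. prod b (insert i S))"
    unfolding subsets_with_max_Suc
    by (rule sum.reindex_cong[where l = "insert i"]) (auto simp: inj_on_def)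
  also have "\<dots> = (\<Sum>S | S \<subseteq> {..<i} \<and> card S = k. prod b S) * b i"
  proof (unfold sum_distrib_right, intro sum.cong refl)
    fix S assume "S \<in> {S. S \<subseteq> {..<i} \<and> card S = k}"
    then have "finite S" "i \<notin> S" using finite_subset by auto
    then show "prod b (insert i S) = prod b S * b i" by (simp add: mult.commute)
  qed
  finally show ?thesis by (simp add: prod_add_degree_const mult.assoc)
qed

section \<open>Centered monomials under t-wise uniformity\<close>

definition centered_monomial :: "nat \<Rightarrow> nat set \<Rightarrow> nat list \<Rightarrow> nat list \<Rightarrow> real" where
  "centered_monomial q A x y = (\<Prod>j\<in>A. centered_eq q (x ! j) (y ! j))"

lemma expectation_centered_monomial_mult:
  assumes tw: "t_wise_uniform q n t D" and "m \<le> n" and AB: "A \<subseteq> {..<m}" "B \<subseteq> {..<m}"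
    and card: "card (A \<union> B) \<le> t" and y: "y \<in> cube q m" "y' \<in> cube q m"
  shows "(\<Sum>x\<in>cube q n. pmf D x * (centered_monomial q A x y * centered_monomial q B x y'))
       = (if A = B then (1 / real q) ^ card A * centered_monomial q A y y' else 0)"
proof -
  define J where "J = A \<union> B"
  define \<phi> where "\<phi> j c = (if j \<in> A then centered_eq q c (y ! j) else 1)
    * (if j \<in> B then centered_eq q c (y' ! j) else 1)" for j c
  have fin: "finite J" using AB finite_subset by (auto simp: J_def)
  have less_q: "y ! j < q" "y' ! j < q" if "j \<in> J" for j
    using that AB nth_cube_less[OF y(1)] nth_cube_less[OF y(2)] by (auto simp: J_def)
  have Jn: "J \<subseteq> {..<n}" using AB \<open>m \<le> n\<close> by (auto simp: J_def)
  have "centered_monomial q A x y * centered_monomial q B x y' = (\<Prod>j\<in>J. \<phi> j (x ! j))" for x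
    unfolding centered_monomial_def \<phi>_def prod.distrib
    by (simp add: prod.inter_restrict[OF fin[unfolded J_def], symmetric] J_def Int_absorb1)
  then have "(\<Sum>x\<in>cube q n. pmf D x * (centered_monomial q A x y * centered_monomial q B x y'))
      = (\<Prod>j\<in>J. (\<Sum>c<q. \<phi> j c) / real q)"
    by (simp add: t_wise_uniform_sum_prod[OF tw Jn card[folded J_def]])
  also have "\<dots> = (if A = B then (1 / real q) ^ card A * centered_monomial q A y y' else 0)"
  proof (cases "A = B")
    case True
    then show ?thesis
      using less_q by (simp add: J_def \<phi>_def centered_monomial_def sum_centered_eq_mult
          prod.distrib power_one_over prod_dividef cong: prod.cong)
  next
    case False
    then obtain j where j: "j \<in> J" "(j \<in> A) \<noteq> (j \<in> B)" by (auto simp: J_def)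
    then have "(\<Sum>c<q. \<phi> j c) = 0"
      using less_q[OF j(1)] by (auto simp: \<phi>_def sum_centered_eq)
    then show ?thesis using False fin j(1) by (auto intro: prod_zero)
  qed
  finally show ?thesis .
qed

text \<open>Up to the factor \<open>q ^ (2m - card A)\<close>, this is the Fourier weight of \<open>g\<close> on the characters
  of \<open>(\<int>/q\<int>)\<^sup>m\<close> with support exactly \<open>A\<close>.\<close>

definition fourier_weight :: "nat \<Rightarrow> nat \<Rightarrow> (nat list \<Rightarrow> real) \<Rightarrow> nat set \<Rightarrow> real" where
  "fourier_weight q m g A = (\<Sum>y\<in>cube q m. \<Sum>y'\<in>cube q m. g y * g y' * centered_monomial q A y y')"

lemma fourier_weight_nonneg:
  assumes A: "A \<subseteq> {..<m}"
  shows "0 \<le> fourier_weight q m g A"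
proof -
  define Z where "Z = PiE A (\<lambda>_. {..<q})"
  define \<psi> where "\<psi> z y = (\<Prod>j\<in>A. centered_eq q (z j) (y ! j))" for z and y :: "nat list"
  have fin: "finite A" using A finite_subset by blast
  have monomial_eq: "centered_monomial q A y y' = (\<Sum>z\<in>Z. \<psi> z y * \<psi> z y')"
    if "y \<in> cube q m" "y' \<in> cube q m" for y y'
  proof -
    have "centered_monomial q A y y' = (\<Prod>j\<in>A. \<Sum>c<q. centered_eq q c (y ! j) * centered_eq q c (y' ! j))"
      unfolding centered_monomial_def using A that
      by (intro prod.cong refl) (auto simp: sum_centered_eq_mult nth_cube_less)
    also have "\<dots> = (\<Sum>z\<in>Z. \<psi> z y * \<psi> z y')"
      unfolding Z_def \<psi>_def by (simp add: prod_sum_PiE[OF fin] prod.distrib)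
    finally show ?thesis .
  qed
  have "fourier_weight q m g A = (\<Sum>z\<in>Z. (\<Sum>y\<in>cube q m. g y * \<psi> z y)\<^sup>2)"
    unfolding fourier_weight_def power2_eq_square sum_product
    by (simp add: monomial_eq sum_distrib_left sum.swap[of _ Z] mult_ac cong: sum.cong)
  also have "\<dots> \<ge> 0" by (simp add: sum_nonneg)
  finally show ?thesis .
qed

lemma sum_fourier_weight:
  assumes "q > 0"
  shows "(\<Sum>A\<in>Pow {..<m}. (1 / real q) ^ (m - card A) * fourier_weight q m g A)
       = (\<Sum>y\<in>cube q m. (g y)\<^sup>2)"
proof -
  have delta: "(\<Sum>A\<in>Pow {..<m}. (1 / real q) ^ (m - card A) * centered_monomial q A y y')
      = (if y = y' then 1 else 0)" if y: "y \<in> cube q m" "y' \<in> cube q m" for y y'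
  proof -
    have "(\<Sum>A\<in>Pow {..<m}. (1 / real q) ^ (m - card A) * centered_monomial q A y y')
        = (\<Sum>A\<in>Pow {..<m}. centered_monomial q A y y' * (\<Prod>j\<in>{..<m} - A. 1 / real q))"
      by (intro sum.cong refl) (auto simp: card_Diff_subset finite_subset mult.commute)
    also have "\<dots> = (\<Prod>j<m. centered_eq q (y ! j) (y' ! j) + 1 / real q)"
      unfolding centered_monomial_def by (rule prod_add[symmetric]) simp
    also have "\<dots> = (\<Prod>j<m. if y ! j = y' ! j then 1 else 0)"
      by (simp add: centered_eq_def)
    also have "\<dots> = (if y = y' then 1 else 0)"
      using y by (auto simp: prod_zero_iff list_eq_iff_nth_eq length_cube)
    finally show ?thesis .
  qed
  have "(\<Sum>A\<in>Pow {..<m}. (1 / real q) ^ (m - card A) * fourier_weight q m g A)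
      = (\<Sum>y\<in>cube q m. \<Sum>y'\<in>cube q m. g y * g y'
          * (\<Sum>A\<in>Pow {..<m}. (1 / real q) ^ (m - card A) * centered_monomial q A y y'))"
    unfolding fourier_weight_def
    by (simp add: sum_distrib_left sum.swap[of _ "Pow {..<m}"] mult_ac)
  also have "\<dots> = (\<Sum>y\<in>cube q m. \<Sum>y'\<in>cube q m. if y = y' then g y * g y' else 0)"
    by (intro sum.cong refl) (simp add: delta)
  also have "\<dots> = (\<Sum>y\<in>cube q m. (g y)\<^sup>2)"
    by (simp add: sum.delta' power2_eq_square)
  finally show ?thesis .
qed

lemma expectation_square_sum_centered_monomial:
  assumes tw: "t_wise_uniform q n (2 * d) D" and "m \<le> n"
    and F: "\<And>A. A \<in> F \<Longrightarrow> A \<subseteq> {..<m} \<and> card A \<le> d"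
  shows "(\<Sum>x\<in>cube q n. pmf D x * (\<Sum>A\<in>F. \<Sum>y\<in>cube q m. g y * centered_monomial q A x y)\<^sup>2)
       = (\<Sum>A\<in>F. (1 / real q) ^ card A * fourier_weight q m g A)"
proof -
  have fin: "finite F" using F by (intro finite_subset[of F "Pow {..<m}"]) auto
  have cross: "(\<Sum>x\<in>cube q n. pmf D x * (centered_monomial q A x y * centered_monomial q B x y'))
      = (if A = B then (1 / real q) ^ card A * centered_monomial q A y y' else 0)"
    if "A \<in> F" "B \<in> F" "y \<in> cube q m" "y' \<in> cube q m" for A B y y'
  proof (rule expectation_centered_monomial_mult[OF tw \<open>m \<le> n\<close>])
    show "card (A \<union> B) \<le> 2 * d"
      using F[OF that(1)] F[OF that(2)] card_Un_le[of A B] by simp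
  qed (use F that in auto)
  have square: "(\<Sum>A\<in>F. \<Sum>y\<in>cube q m. g y * centered_monomial q A x y)\<^sup>2
      = (\<Sum>A\<in>F. \<Sum>B\<in>F. \<Sum>y\<in>cube q m. \<Sum>y'\<in>cube q m.
           g y * g y' * (centered_monomial q A x y * centered_monomial q B x y'))" for x
    by (simp only: power2_eq_square sum_product) (simp add: mult_ac)
  have "(\<Sum>x\<in>cube q n. pmf D x * (\<Sum>A\<in>F. \<Sum>y\<in>cube q m. g y * centered_monomial q A x y)\<^sup>2)
      = (\<Sum>A\<in>F. \<Sum>B\<in>F. \<Sum>y\<in>cube q m. \<Sum>y'\<in>cube q m. \<Sum>x\<in>cube q n.
           pmf D x * (g y * g y' * (centered_monomial q A x y * centered_monomial q B x y')))"
    unfolding square by (simp only: sum_mult_sum_swap)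
  also have "\<dots> = (\<Sum>A\<in>F. \<Sum>B\<in>F. \<Sum>y\<in>cube q m. \<Sum>y'\<in>cube q m. g y * g y' *
           (\<Sum>x\<in>cube q n. pmf D x * (centered_monomial q A x y * centered_monomial q B x y')))"
    by (simp add: sum_distrib_left mult_ac)
  also have "\<dots> = (\<Sum>A\<in>F. \<Sum>B\<in>F. if A = B then \<Sum>y\<in>cube q m. \<Sum>y'\<in>cube q m.
           g y * g y' * ((1 / real q) ^ card A * centered_monomial q A y y') else 0)"
    by (intro sum.cong refl) (auto simp: cross)
  also have "\<dots> = (\<Sum>A\<in>F. \<Sum>y\<in>cube q m. \<Sum>y'\<in>cube q m.
           g y * g y' * ((1 / real q) ^ card A * centered_monomial q A y y'))"
    using fin by simp
  also have "\<dots> = (\<Sum>A\<in>F. (1 / real q) ^ card A * fourier_weight q m g A)"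
    by (simp add: fourier_weight_def sum_distrib_left mult_ac)
  finally show ?thesis .
qed

lemma sum_fourier_weight_le:
  assumes "q > 0" and g: "\<And>y. y \<in> cube q m \<Longrightarrow> \<bar>g y\<bar> \<le> 1" and F: "F \<subseteq> Pow {..<m}"
  shows "(\<Sum>A\<in>F. (1 / real q) ^ (m - card A) * fourier_weight q m g A) \<le> real q ^ m"
proof -
  have "(\<Sum>A\<in>F. (1 / real q) ^ (m - card A) * fourier_weight q m g A)
      \<le> (\<Sum>A\<in>Pow {..<m}. (1 / real q) ^ (m - card A) * fourier_weight q m g A)"
    using F by (intro sum_mono2) (auto intro!: mult_nonneg_nonneg fourier_weight_nonneg)
  also have "\<dots> = (\<Sum>y\<in>cube q m. (g y)\<^sup>2)"
    using assms(1) by (rule sum_fourier_weight)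
  also have "\<dots> \<le> (\<Sum>y\<in>cube q m. 1)"
    using g by (intro sum_mono) (metis abs_ge_zero power2_abs power_le_one)
  also have "\<dots> = real q ^ m"
    by (simp add: card_cube)
  finally show ?thesis .
qed

lemma expectation_square_subsets_with_max_le_1:
  assumes tw: "t_wise_uniform q n (2 * Suc k) D" and "q > 0" "i < n"
    and g: "\<And>y. y \<in> cube q (Suc i) \<Longrightarrow> \<bar>g y\<bar> \<le> 1"
  shows "(\<Sum>x\<in>cube q n. pmf D x * ((1 / real q) ^ (i - k) *
           (\<Sum>A\<in>subsets_with_max (Suc k) i. \<Sum>y\<in>cube q (Suc i). g y * centered_monomial q A x y))\<^sup>2)
       \<le> 1"
proof (cases "k \<le> i")
  case True
  let ?F = "subsets_with_max (Suc k) i" and ?r = "1 / real q"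
  have F: "A \<subseteq> {..<Suc i} \<and> card A = Suc k" if "A \<in> ?F" for A
    using that by (auto simp: subsets_with_max_def)
  let ?S = "\<lambda>x. \<Sum>A\<in>?F. \<Sum>y\<in>cube q (Suc i). g y * centered_monomial q A x y"
  have "(\<Sum>x\<in>cube q n. pmf D x * (?r ^ (i - k) * ?S x)\<^sup>2)
      = (\<Sum>x\<in>cube q n. (?r ^ (i - k))\<^sup>2 * (pmf D x * (?S x)\<^sup>2))"
    by (intro sum.cong refl) (simp only: power_mult_distrib mult_ac)
  also have "\<dots> = (?r ^ (i - k))\<^sup>2 * (\<Sum>x\<in>cube q n. pmf D x * (?S x)\<^sup>2)"
    by (rule sum_distrib_left[symmetric])
  also have "\<dots> = (\<Sum>A\<in>?F. (?r ^ (i - k))\<^sup>2 * (?r ^ card A * fourier_weight q (Suc i) g A))"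
    using \<open>i < n\<close> F
    by (subst expectation_square_sum_centered_monomial[OF tw]) (auto simp: sum_distrib_left)
  also have "\<dots> = ?r ^ Suc i * (\<Sum>A\<in>?F. ?r ^ (Suc i - card A) * fourier_weight q (Suc i) g A)"
    unfolding sum_distrib_left
  proof (intro sum.cong refl)
    fix A assume "A \<in> ?F"
    then have card: "card A = Suc k" using F by blast
    have "Suc i = (i - k) + Suc k" using True by simp
    then have power_Suc_i: "?r ^ Suc i = ?r ^ (i - k) * ?r ^ Suc k"
      by (metis power_add)
    show "(?r ^ (i - k))\<^sup>2 * (?r ^ card A * fourier_weight q (Suc i) g A)
        = ?r ^ Suc i * (?r ^ (Suc i - card A) * fourier_weight q (Suc i) g A)"
      unfolding card diff_Suc_Suc power_Suc_i by (simp only: power2_eq_square mult_ac)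
  qed
  also have "\<dots> \<le> ?r ^ Suc i * real q ^ Suc i"
    using F by (intro mult_left_mono sum_fourier_weight_le \<open>q > 0\<close> g) auto
  also have "\<dots> = 1"
    using \<open>q > 0\<close> by (simp add: power_one_over)
  finally show ?thesis .
next
  case False
  have "subsets_with_max (Suc k) i = {}"
  proof (rule equals0I)
    fix A assume "A \<in> subsets_with_max (Suc k) i"
    then have "A \<subseteq> {..i}" "card A = Suc k" by (auto simp: subsets_with_max_def)
    then show False using card_mono[OF finite_atMost, of A i] False by simp
  qed
  then show ?thesis by simp
qed

section \<open>The noise expansion of a read-once branching program\<close>

lemma rob_run_append:
  "rob_run tr i v (xs @ ys) = rob_run tr (i + length xs) (rob_run tr i v xs) ys"
  by (induction xs arbitrary: i v) auto

lemma rob_run_in_layer: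
  assumes "is_robp q n w V s Acc tr"
  shows "v \<in> V i \<Longrightarrow> set y \<subseteq> {..<q} \<Longrightarrow> i + length y \<le> n
    \<Longrightarrow> rob_run tr i v y \<in> V (i + length y)"
proof (induction y arbitrary: i v)
  case (Cons a y)
  then have "tr i v a \<in> V (Suc i)" using assms by (auto simp: is_robp_def)
  with Cons show ?case by force
qed simp

lemma rob_eval_append:
  assumes robp: "is_robp q n w V s Acc tr" and y1: "y1 \<in> cube q m" and "m \<le> n"
  shows "rob_eval s Acc tr (y1 @ y2)
       = (\<Sum>v\<in>V m. of_bool (rob_run tr 0 s y1 = v) * of_bool (rob_run tr m v y2 \<in> Acc))"
proof -
  have "rob_run tr 0 s y1 \<in> V m"
    using rob_run_in_layer[OF robp, of s 0 y1] robp y1 \<open>m \<le> n\<close> by (simp add: is_robp_def cube_def)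
  moreover have "finite (V m)" using robp \<open>m \<le> n\<close> by (simp add: is_robp_def)
  ultimately have "(\<Sum>v\<in>V m. of_bool (rob_run tr 0 s y1 = v) * of_bool (rob_run tr m v y2 \<in> Acc))
      = (of_bool (rob_run tr m (rob_run tr 0 s y1) y2 \<in> Acc) :: real)"
    by (simp add: if_distrib sum.delta' cong: if_cong)
  then show ?thesis
    using y1 by (simp add: rob_eval_def rob_run_append length_cube)
qed

text \<open>The group of \<open>i\<close> in the expansion of \<open>sc_prob\<close> by \<open>prod_add_truncated\<close>.\<close>

definition noise_tail :: "nat \<Rightarrow> real \<Rightarrow> nat \<Rightarrow> nat \<Rightarrow> nat list \<Rightarrow> nat list \<Rightarrow> real" where
  "noise_tail q \<eta> k i x y = (1 - \<eta>) ^ Suc k * (1 / real q) ^ (i - k)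
     * (\<Sum>A\<in>subsets_with_max (Suc k) i. centered_monomial q A x y)
     * sc_prob q \<eta> (drop (Suc i) x) (drop (Suc i) y)"

lemma sc_prob_expansion:
  assumes "q > 0" "x \<in> cube q n" "y \<in> cube q n"
  shows "sc_prob q \<eta> x y = (1 / real q) ^ n
     + (\<Sum>l<k. prod_add_degree (\<lambda>_. 1 / real q) (\<lambda>j. (1 - \<eta>) * centered_eq q (x ! j) (y ! j)) (Suc l) n)
     + (\<Sum>i<n. noise_tail q \<eta> k i x y)"
proof -
  let ?a = "\<lambda>_. 1 / real q" and ?b = "\<lambda>j. (1 - \<eta>) * centered_eq q (x ! j) (y ! j)"
  have tail: "prod_add_degree ?a ?b k i * ?b i * (\<Prod>j\<in>{Suc i..<n}. ?a j + ?b j) = noise_tail q \<eta> k i x y"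
    for i
  proof -
    have "(\<Sum>A\<in>subsets_with_max (Suc k) i. prod ?b A)
        = (1 - \<eta>) ^ Suc k * (\<Sum>A\<in>subsets_with_max (Suc k) i. centered_monomial q A x y)"
      unfolding sum_distrib_left centered_monomial_def
      by (intro sum.cong refl) (simp add: prod.distrib subsets_with_max_def)
    then show ?thesis
      unfolding prod_add_degree_const_mult[of "1 / real q" ?b k i]
      using assms by (simp add: noise_tail_def sc_prob_drop length_cube mult_ac)
  qed
  have "sc_prob q \<eta> x y = (\<Prod>j<n. ?a j + ?b j)"
    using assms by (simp add: sc_prob_eq_prod length_cube)
  also have "\<dots> = (\<Sum>l\<le>k. prod_add_degree ?a ?b l n) + (\<Sum>i<n. noise_tail q \<eta> k i x y)"
    by (simp add: prod_add_truncated[where k = k] tail)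
  also have "(\<Sum>l\<le>k. prod_add_degree ?a ?b l n) = (1 / real q) ^ n + (\<Sum>l<k. prod_add_degree ?a ?b (Suc l) n)"
    by (simp add: sum.atMost_shift prod_add_degree_0)
  finally show ?thesis .
qed

lemma noise_op_expansion:
  assumes "q > 0" "x \<in> cube q n"
  shows "noise_op q n \<eta> f x = (\<Sum>y\<in>cube q n. f y) / real q ^ n
      + (\<Sum>l<k. \<Sum>y\<in>cube q n. f y *
          prod_add_degree (\<lambda>_. 1 / real q) (\<lambda>j. (1 - \<eta>) * centered_eq q (x ! j) (y ! j)) (Suc l) n)
      + (\<Sum>i<n. \<Sum>y\<in>cube q n. f y * noise_tail q \<eta> k i x y)"
proof -
  have "noise_op q n \<eta> f x = (\<Sum>y\<in>cube q n. f y * ((1 / real q) ^ n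
      + (\<Sum>l<k. prod_add_degree (\<lambda>_. 1 / real q) (\<lambda>j. (1 - \<eta>) * centered_eq q (x ! j) (y ! j)) (Suc l) n)
      + (\<Sum>i<n. noise_tail q \<eta> k i x y)))"
    unfolding noise_op_def by (intro sum.cong refl) (simp add: sc_prob_expansion[OF assms] mult.commute)
  then show ?thesis
    by (simp add: distrib_left sum.distrib sum_distrib_left sum_divide_distrib power_one_over
        sum.swap[of _ "cube q n"])
qed

lemma expectation_prod_add_degree_eq_0:
  assumes tw: "t_wise_uniform q n t D" and "1 \<le> l" "l \<le> t" and y: "y \<in> cube q n"
  shows "(\<Sum>x\<in>cube q n. pmf D x *
           prod_add_degree (\<lambda>_. 1 / real q) (\<lambda>j. \<rho> * centered_eq q (x ! j) (y ! j)) l n) = 0"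
proof -
  let ?F = "{S. S \<subseteq> {..<n} \<and> card S = l}"
  have zero: "(\<Sum>x\<in>cube q n. pmf D x * centered_monomial q S x y) = 0" if "S \<in> ?F" for S
    using expectation_centered_monomial_mult[OF tw order.refl, of S "{}" y y] that y \<open>1 \<le> l\<close> \<open>l \<le> t\<close>
    by (auto simp: centered_monomial_def)
  have expand: "prod_add_degree (\<lambda>_. 1 / real q) (\<lambda>j. \<rho> * centered_eq q (x ! j) (y ! j)) l n
      = (1 / real q) ^ (n - l) * \<rho> ^ l * (\<Sum>S\<in>?F. centered_monomial q S x y)" for x
    unfolding prod_add_degree_const sum_distrib_left centered_monomial_def
    by (intro sum.cong refl) (simp add: prod.distrib mult_ac)
  have "(\<Sum>x\<in>cube q n. pmf D x *
           prod_add_degree (\<lambda>_. 1 / real q) (\<lambda>j. \<rho> * centered_eq q (x ! j) (y ! j)) l n)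
      = (1 / real q) ^ (n - l) * \<rho> ^ l * (\<Sum>x\<in>cube q n. pmf D x * (\<Sum>S\<in>?F. centered_monomial q S x y))"
    by (simp add: expand sum_distrib_left mult_ac)
  also have "\<dots> = (1 / real q) ^ (n - l) * \<rho> ^ l * (\<Sum>S\<in>?F. \<Sum>x\<in>cube q n. pmf D x * centered_monomial q S x y)"
    by (simp only: sum_mult_sum_swap)
  also have "\<dots> = 0"
    by (simp add: zero)
  finally show ?thesis .
qed

lemma sum_rob_eval_noise_tail:
  assumes robp: "is_robp q n w V s Acc tr" and "i < n"
  shows "(\<Sum>y\<in>cube q n. rob_eval s Acc tr y * noise_tail q \<eta> k i x y)
       = (1 - \<eta>) ^ Suc k * (\<Sum>v\<in>V (Suc i).
           ((1 / real q) ^ (i - k) * (\<Sum>A\<in>subsets_with_max (Suc k) i. \<Sum>y\<in>cube q (Suc i).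
              of_bool (rob_run tr 0 s y = v) * centered_monomial q A x y))
           * noise_op q (n - Suc i) \<eta> (\<lambda>z. of_bool (rob_run tr (Suc i) v z \<in> Acc)) (drop (Suc i) x))"
proof -
  let ?F = "subsets_with_max (Suc k) i" and ?m = "n - Suc i"
  define G where "G v y = of_bool (rob_run tr 0 s y = v)
      * ((1 / real q) ^ (i - k) * (\<Sum>A\<in>?F. centered_monomial q A x y))" for v y
  define H where "H v z = of_bool (rob_run tr (Suc i) v z \<in> Acc) * sc_prob q \<eta> (drop (Suc i) x) z" for v z
  have factor: "rob_eval s Acc tr (y @ z) * noise_tail q \<eta> k i x (y @ z)
      = (1 - \<eta>) ^ Suc k * (\<Sum>v\<in>V (Suc i). G v y * H v z)" if y: "y \<in> cube q (Suc i)" for y z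
  proof -
    have "centered_monomial q A x (y @ z) = centered_monomial q A x y" if "A \<in> ?F" for A
      using that y unfolding centered_monomial_def subsets_with_max_def
      by (intro prod.cong refl) (auto simp: nth_append length_cube)
    then show ?thesis
      using y \<open>i < n\<close> by (simp add: rob_eval_append[OF robp y] noise_tail_def length_cube G_def H_def
          sum_distrib_left sum_distrib_right sum.swap[of _ ?F] mult_ac cong: sum.cong)
  qed
  have "cube q n = cube q (Suc i + ?m)" using \<open>i < n\<close> by simp
  then have "(\<Sum>y\<in>cube q n. rob_eval s Acc tr y * noise_tail q \<eta> k i x y)
      = (\<Sum>y\<in>cube q (Suc i). \<Sum>z\<in>cube q ?m. (1 - \<eta>) ^ Suc k * (\<Sum>v\<in>V (Suc i). G v y * H v z))"
    by (subst (1) \<open>cube q n = _\<close>, subst sum_cube_append) (intro sum.cong refl, simp add: factor)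
  also have "\<dots> = (1 - \<eta>) ^ Suc k * (\<Sum>v\<in>V (Suc i). \<Sum>y\<in>cube q (Suc i). \<Sum>z\<in>cube q ?m. G v y * H v z)"
    by (simp add: sum_distrib_left sum.swap[of _ "V (Suc i)"])
  also have "\<dots> = (1 - \<eta>) ^ Suc k * (\<Sum>v\<in>V (Suc i). (\<Sum>y\<in>cube q (Suc i). G v y) * (\<Sum>z\<in>cube q ?m. H v z))"
    by (simp only: sum_product)
  moreover have "(\<Sum>y\<in>cube q (Suc i). G v y) = (1 / real q) ^ (i - k) * (\<Sum>A\<in>?F. \<Sum>y\<in>cube q (Suc i).
      of_bool (rob_run tr 0 s y = v) * centered_monomial q A x y)" for v
    by (simp add: G_def sum_distrib_left sum.swap[of _ ?F] mult_ac
        del: sum_of_bool_mult_eq sum_mult_of_bool_eq)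
  moreover have "(\<Sum>z\<in>cube q ?m. H v z)
      = noise_op q ?m \<eta> (\<lambda>z. of_bool (rob_run tr (Suc i) v z \<in> Acc)) (drop (Suc i) x)" for v
    by (simp add: H_def noise_op_def mult.commute)
  ultimately show ?thesis by simp
qed

lemma expectation_noise_tail_le:
  assumes tw: "t_wise_uniform q n (2 * Suc k) D" and "q > 0" "0 \<le> \<eta>" "\<eta> \<le> 1"
    and robp: "is_robp q n w V s Acc tr" and "i < n"
  shows "\<bar>\<Sum>x\<in>cube q n. pmf D x * (\<Sum>y\<in>cube q n. rob_eval s Acc tr y * noise_tail q \<eta> k i x y)\<bar>
       \<le> real w * (1 - \<eta>) ^ Suc k"
proof -
  let ?F = "subsets_with_max (Suc k) i"
  define G where "G v x = (1 / real q) ^ (i - k) * (\<Sum>A\<in>?F. \<Sum>y\<in>cube q (Suc i).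
      of_bool (rob_run tr 0 s y = v) * centered_monomial q A x y)" for v x
  define H where
    "H v x = noise_op q (n - Suc i) \<eta> (\<lambda>z. of_bool (rob_run tr (Suc i) v z \<in> Acc)) (drop (Suc i) x)"
    for v x
  have supp: "set_pmf D \<subseteq> cube q n" using tw by (simp add: t_wise_uniform_def)
  have layer: "finite (V (Suc i))" "card (V (Suc i)) \<le> w"
    using robp \<open>i < n\<close> by (auto simp: is_robp_def)
  have GH: "\<bar>\<Sum>x\<in>cube q n. pmf D x * (G v x * H v x)\<bar> \<le> 1" for v
  proof (rule abs_sum_mult_le_1)
    show "\<bar>H v x\<bar> \<le> 1" if "x \<in> cube q n" for x
      using noise_op_bounds[OF \<open>q > 0\<close> \<open>0 \<le> \<eta>\<close> \<open>\<eta> \<le> 1\<close> drop_in_cube[OF that]]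
      by (simp add: H_def)
    show "(\<Sum>x\<in>cube q n. pmf D x * (G v x)\<^sup>2) \<le> 1"
      unfolding G_def by (rule expectation_square_subsets_with_max_le_1[OF tw \<open>q > 0\<close> \<open>i < n\<close>]) simp
  qed (simp_all add: sum_pmf_cube[OF supp])
  have "(\<Sum>x\<in>cube q n. pmf D x * (\<Sum>y\<in>cube q n. rob_eval s Acc tr y * noise_tail q \<eta> k i x y))
      = (1 - \<eta>) ^ Suc k * (\<Sum>v\<in>V (Suc i). \<Sum>x\<in>cube q n. pmf D x * (G v x * H v x))"
    unfolding sum_rob_eval_noise_tail[OF robp \<open>i < n\<close>] G_def H_def
    by (simp add: sum_distrib_left sum.swap[of _ "V (Suc i)"] mult_ac)
  also have "\<bar>\<dots>\<bar> \<le> (1 - \<eta>) ^ Suc k * (\<Sum>v\<in>V (Suc i). \<bar>\<Sum>x\<in>cube q n. pmf D x * (G v x * H v x)\<bar>)"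
    using \<open>\<eta> \<le> 1\<close> by (simp add: abs_mult sum_abs mult_left_mono)
  also have "\<dots> \<le> (1 - \<eta>) ^ Suc k * (\<Sum>v\<in>V (Suc i). 1)"
    using \<open>\<eta> \<le> 1\<close> by (intro mult_left_mono sum_mono GH) simp
  also have "\<dots> \<le> real w * (1 - \<eta>) ^ Suc k"
    using layer \<open>\<eta> \<le> 1\<close> by (simp add: mult.commute mult_right_mono del: power_Suc)
  finally show ?thesis .
qed

lemma noise_robp_error_le_Suc:
  assumes "q > 0" and tw: "t_wise_uniform q n (2 * Suc k) D" and "0 \<le> \<eta>" "\<eta> \<le> 1"
    and robp: "is_robp q n w V s Acc tr"
  shows "\<bar>measure_pmf.expectation D (noise_op q n \<eta> (rob_eval s Acc tr))
           - (\<Sum>x\<in>cube q n. rob_eval s Acc tr x) / real q ^ n\<bar>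
         \<le> real n * real w * (1 - \<eta>) ^ Suc k"
proof -
  let ?f = "rob_eval s Acc tr"
  let ?e = "\<lambda>l x y. prod_add_degree (\<lambda>_. 1 / real q) (\<lambda>j. (1 - \<eta>) * centered_eq q (x ! j) (y ! j)) (Suc l) n"
  let ?T = "\<lambda>i. \<Sum>x\<in>cube q n. pmf D x * (\<Sum>y\<in>cube q n. ?f y * noise_tail q \<eta> k i x y)"
  have supp: "set_pmf D \<subseteq> cube q n" using tw by (simp add: t_wise_uniform_def)
  have low: "(\<Sum>x\<in>cube q n. pmf D x * (\<Sum>y\<in>cube q n. ?f y * ?e l x y)) = 0" if "l < k" for l
  proof -
    have "(\<Sum>x\<in>cube q n. pmf D x * (\<Sum>y\<in>cube q n. ?f y * ?e l x y))
        = (\<Sum>y\<in>cube q n. \<Sum>x\<in>cube q n. pmf D x * (?f y * ?e l x y))"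
      by (rule sum_mult_sum_swap)
    also have "\<dots> = (\<Sum>y\<in>cube q n. ?f y * (\<Sum>x\<in>cube q n. pmf D x * ?e l x y))"
      by (simp add: sum_distrib_left mult_ac)
    also have "\<dots> = 0"
      using that by (simp add: expectation_prod_add_degree_eq_0[OF tw])
    finally show ?thesis .
  qed
  have "measure_pmf.expectation D (noise_op q n \<eta> ?f)
      = (\<Sum>x\<in>cube q n. pmf D x * ((\<Sum>y\<in>cube q n. ?f y) / real q ^ n))
        + (\<Sum>x\<in>cube q n. pmf D x * (\<Sum>l<k. \<Sum>y\<in>cube q n. ?f y * ?e l x y))
        + (\<Sum>x\<in>cube q n. pmf D x * (\<Sum>i<n. \<Sum>y\<in>cube q n. ?f y * noise_tail q \<eta> k i x y))"
    by (simp add: expectation_eq_sum_cube[OF supp] noise_op_expansion[OF \<open>q > 0\<close>, where k = k] distrib_left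
        sum.distrib cong: sum.cong)
  also have "(\<Sum>x\<in>cube q n. pmf D x * ((\<Sum>y\<in>cube q n. ?f y) / real q ^ n))
      = (\<Sum>y\<in>cube q n. ?f y) / real q ^ n"
    by (simp add: sum_pmf_cube[OF supp] flip: sum_divide_distrib sum_distrib_right)
  also have "(\<Sum>x\<in>cube q n. pmf D x * (\<Sum>l<k. \<Sum>y\<in>cube q n. ?f y * ?e l x y)) = 0"
    by (subst sum_mult_sum_swap) (simp add: low)
  also have "(\<Sum>x\<in>cube q n. pmf D x * (\<Sum>i<n. \<Sum>y\<in>cube q n. ?f y * noise_tail q \<eta> k i x y))
      = (\<Sum>i<n. ?T i)"
    by (rule sum_mult_sum_swap)
  finally have "measure_pmf.expectation D (noise_op q n \<eta> ?f) - (\<Sum>x\<in>cube q n. ?f x) / real q ^ n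
      = (\<Sum>i<n. ?T i)"
    by simp
  also have "\<bar>\<dots>\<bar> \<le> (\<Sum>i<n. real w * (1 - \<eta>) ^ Suc k)"
    using expectation_noise_tail_le[OF tw assms(1,3,4) robp]
    by (rule order.trans[OF sum_abs sum_mono]) simp
  finally show ?thesis by simp
qed

lemma noise_op_error_le_1:
  assumes "q > 0" "set_pmf D \<subseteq> cube q n" "0 \<le> \<eta>" "\<eta> \<le> 1" and f: "\<And>y. 0 \<le> f y \<and> f y \<le> 1"
  shows "\<bar>measure_pmf.expectation D (noise_op q n \<eta> f) - (\<Sum>x\<in>cube q n. f x) / real q ^ n\<bar> \<le> 1"
proof -
  have "0 \<le> (\<Sum>x\<in>cube q n. pmf D x * noise_op q n \<eta> f x)"
    using noise_op_bounds[OF assms(1,3,4) _ f] by (intro sum_nonneg) simp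
  moreover have "(\<Sum>x\<in>cube q n. pmf D x * noise_op q n \<eta> f x) \<le> (\<Sum>x\<in>cube q n. pmf D x)"
    using noise_op_bounds[OF assms(1,3,4) _ f] by (intro sum_mono) (simp add: mult_left_le)
  moreover have "0 \<le> (\<Sum>x\<in>cube q n. f x)" "(\<Sum>x\<in>cube q n. f x) \<le> real q ^ n"
    using f sum_mono[of "cube q n" f "\<lambda>_. 1"] by (auto intro: sum_nonneg simp: card_cube)
  then have "0 \<le> (\<Sum>x\<in>cube q n. f x) / real q ^ n" "(\<Sum>x\<in>cube q n. f x) / real q ^ n \<le> 1"
    using \<open>q > 0\<close> by simp_all
  ultimately show ?thesis
    by (simp add: expectation_eq_sum_cube[OF assms(2)] sum_pmf_cube[OF assms(2)] abs_le_iff)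
qed

lemma noise_robp_error_le_nw:
  assumes "q > 0" and tw: "t_wise_uniform q n t D" and "0 \<le> \<eta>" "\<eta> \<le> 1"
    and robp: "is_robp q n w V s Acc tr"
  shows "\<bar>measure_pmf.expectation D (noise_op q n \<eta> (rob_eval s Acc tr))
           - (\<Sum>x\<in>cube q n. rob_eval s Acc tr x) / real q ^ n\<bar>
         \<le> real n * real w"
proof (cases "n = 0")
  case True
  \<comment> \<open>on the one-point cube every distribution is uniform\<close>
  then have "t_wise_uniform q n (2 * Suc 0) D"
    using tw by (simp add: t_wise_uniform_def)
  from noise_robp_error_le_Suc[OF \<open>q > 0\<close> this assms(3,4) robp] show ?thesis
    using True by simp
next
  case False
  have "1 \<le> card (V 0)" "card (V 0) \<le> w"
    using robp by (auto simp: is_robp_def card_gt_0_iff Suc_le_eq)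
  then have "1 \<le> real n * real w"
    using False mult_mono[of 1 "real n" 1 "real w"] by simp
  moreover have "set_pmf D \<subseteq> cube q n" using tw by (simp add: t_wise_uniform_def)
  then have "\<bar>measure_pmf.expectation D (noise_op q n \<eta> (rob_eval s Acc tr))
      - (\<Sum>x\<in>cube q n. rob_eval s Acc tr x) / real q ^ n\<bar> \<le> 1"
    by (rule noise_op_error_le_1[OF \<open>q > 0\<close> _ assms(3,4)]) (simp add: rob_eval_def)
  ultimately show ?thesis by simp
qed

theorem theorem4p2:
  fixes q n k w :: nat and \<eta> :: real and D :: "nat list pmf"
    and V :: "nat \<Rightarrow> 'v set" and s :: 'v and Acc :: "'v set"
    and tr :: "nat \<Rightarrow> 'v \<Rightarrow> nat \<Rightarrow> 'v"
  assumes "q \<ge> 2"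
    and "t_wise_uniform q n (2 * k) D"
    and "0 \<le> \<eta>" and "\<eta> \<le> 1"
    and "is_robp q n w V s Acc tr"
  shows "\<bar>measure_pmf.expectation D (noise_op q n \<eta> (rob_eval s Acc tr))
           - (\<Sum>x\<in>cube q n. rob_eval s Acc tr x) / real q ^ n\<bar>
         \<le> real n * real w * (1 - \<eta>) ^ k"
proof -
  have q: "q > 0" using \<open>q \<ge> 2\<close> by simp
  show ?thesis
  proof (cases k)
    case 0
    then show ?thesis using noise_robp_error_le_nw[OF q assms(2-5)] by simp
  next
    case (Suc k')
    then show ?thesis using noise_robp_error_le_Suc[OF q _ assms(3-5)] assms(2) by simp
  qed
qed

end
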